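(* $\mathrm{non}^{*}_{\omega}(\mathcal{S}pl)=\mathfrak{s}_{\omega}$.
   Context: For an infinite $A\subseteq\omega$, let $S(A)$ be the set of all $\sigma\in2^{<\omega}$ such that $\sigma$ is constant on $A\cap\mathrm{dom}(\sigma)$. The splitting ideal $\mathcal{S}pl$ is the ideal on $2^{<\omega}$ generated by the sets $S(A)$, $A\in[\omega]^{\omega}$. For an ideal $\mathcal{J}$ on a countable set $X$, $\mathrm{non}_{\omega}^*(\mathcal{J})=\min\{|\mathcal{F}|:\mathcal{F}\subseteq[X]^{\omega}$ and for every countable $\bar{A}\subseteq\mathcal{J}$ there is $F\in\mathcal{F}$ such that $A\cap F$ is finite for every $A\in\bar{A}\}$. A family $\mathcal{A}\subseteq[\omega]^{\omega}$ is $\omega$-splitting if for every countable $\{A_{n}:n\in\omega\}\subseteq[\omega]^{\omega}$ there is $A\in\mathcal{A}$ splitting every $A_{n}$ (i.e. $A_n\cap A$ and $A_n\setminus A$ are infinite). $\mathfrak{s}_{\omega}$ is the least size of an $\omega$-splitting family. *)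

theory Defs
  imports Main "HOL-Library.Countable_Set"
begin

text \<open>Finite binary sequences \<open>2^{<\<omega>}\<close> are modelled as \<open>bool list\<close>;
  \<open>dom \<sigma> = {0..<length \<sigma>}\<close>.\<close>

definition S_set :: "nat set \<Rightarrow> bool list set" where
  "S_set A = {\<sigma>. \<forall>i\<in>A. \<forall>j\<in>A. i < length \<sigma> \<longrightarrow> j < length \<sigma> \<longrightarrow> \<sigma> ! i = \<sigma> ! j}"

definition Spl :: "bool list set set" where
  "Spl = {Y. \<exists>As. finite As \<and> (\<forall>A\<in>As. infinite A) \<and> Y \<subseteq> (\<Union>A\<in>As. S_set A)}"

definition non_star_omega_family :: "'a set set \<Rightarrow> 'a set set \<Rightarrow> bool" where
  "non_star_omega_family J Fs \<longleftrightarrow>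
     (\<forall>F\<in>Fs. infinite F \<and> countable F) \<and>
     (\<forall>Bs :: 'a set set. countable Bs \<and> Bs \<subseteq> J \<longrightarrow> (\<exists>F\<in>Fs. \<forall>B\<in>Bs. finite (B \<inter> F)))"

definition non_star_omega :: "'a set set \<Rightarrow> 'a set rel" where
  "non_star_omega J = card_of (SOME Fs. non_star_omega_family J Fs \<and>
       (\<forall>Gs. non_star_omega_family J Gs \<longrightarrow> (card_of Fs, card_of Gs) \<in> ordLeq))"

definition splits :: "nat set \<Rightarrow> nat set \<Rightarrow> bool" where
  "splits A B \<longleftrightarrow> infinite (B \<inter> A) \<and> infinite (B - A)"

definition omega_splitting :: "nat set set \<Rightarrow> bool" where
  "omega_splitting As \<longleftrightarrow> (\<forall>A\<in>As. infinite A) \<and>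
     (\<forall>B :: nat \<Rightarrow> nat set. (\<forall>n. infinite (B n)) \<longrightarrow> (\<exists>A\<in>As. \<forall>n. splits A (B n)))"

definition s_omega :: "nat set rel" where
  "s_omega = card_of (SOME As. omega_splitting As \<and>
       (\<forall>Bs. omega_splitting Bs \<longrightarrow> (card_of As, card_of Bs) \<in> ordLeq))"

end

theory Submission
  imports Defs
begin

(* Both cardinals are minima over families that can be converted into each other without
   increasing their size.

   If A splits every member C of a countable family, then the initial segments of the
   characteristic function of A meet each S(C) in finitely many nodes; so the sets of initial
   segments of the members of an omega-splitting family witness non*_omega(Spl).

   Conversely, every infinite set F of nodes yields a branch x_F all of whose nodes have infinitely
   many extensions sigma_i in F (with |sigma_i| >= i), and the union A_F of the even blocks of an
   interval partition outgrowing i |-> |sigma_(|sigma_i|)|. Given B_n split by no x_F and no A_F, fix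
   a partition h each of whose blocks eventually meets every B_n. As A_F does not split some B_n,
   infinitely many intervals [i, |sigma_i|) lie inside single blocks of h, of one parity r; as x_F is
   eventually constant on some B_n, all these sigma_i lie in S(C), where C is the part of B_n in the
   blocks of the other parity. The countably many such S(C) belong to Spl, so some F of a witness
   family meets all of them finitely: a contradiction. *)

unbundle cardinal_syntax

section \<open>Cardinal minima\<close>

lemma ex_card_of_minimal:
  assumes "P X"
  shows "\<exists>X. P X \<and> (\<forall>Y. P Y \<longrightarrow> card_of X \<le>o card_of Y)"
proof -
  obtain r where "r \<in> card_of ` Collect P" "\<forall>r' \<in> card_of ` Collect P. r \<le>o r'"
    using exists_minim_Card_order[of "card_of ` Collect P"] assms by (auto simp: card_of_Card_order)
  then show ?thesis by blast
qed

lemma card_of_minimal_ordIso: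
  fixes P :: "'a set \<Rightarrow> bool" and Q :: "'b set \<Rightarrow> bool"
  assumes "P X0"
    and PQ: "\<And>X. P X \<Longrightarrow> \<exists>Y. Q Y \<and> card_of Y \<le>o card_of X"
    and QP: "\<And>Y. Q Y \<Longrightarrow> \<exists>X. P X \<and> card_of X \<le>o card_of Y"
  shows "card_of (SOME X. P X \<and> (\<forall>X'. P X' \<longrightarrow> card_of X \<le>o card_of X')) =o
         card_of (SOME Y. Q Y \<and> (\<forall>Y'. Q Y' \<longrightarrow> card_of Y \<le>o card_of Y'))"
    (is "card_of ?X =o card_of ?Y")
proof -
  obtain Y0 where "Q Y0" using PQ[OF \<open>P X0\<close>] by blast
  have X: "P ?X \<and> (\<forall>X'. P X' \<longrightarrow> card_of ?X \<le>o card_of X')"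
    by (rule someI_ex[OF ex_card_of_minimal[of P, OF \<open>P X0\<close>]])
  have Y: "Q ?Y \<and> (\<forall>Y'. Q Y' \<longrightarrow> card_of ?Y \<le>o card_of Y')"
    by (rule someI_ex[OF ex_card_of_minimal[of Q, OF \<open>Q Y0\<close>]])
  obtain X' where "P X'" "card_of X' \<le>o card_of ?Y" using QP Y by blast
  then have "card_of ?X \<le>o card_of ?Y" using X ordLeq_transitive by blast
  moreover obtain Y' where "Q Y'" "card_of Y' \<le>o card_of ?X" using PQ X by blast
  then have "card_of ?Y \<le>o card_of ?X" using Y ordLeq_transitive by blast
  ultimately show ?thesis by (simp add: ordIso_iff_ordLeq)
qed

lemma card_of_Un_images_ordLeq:
  assumes "infinite X"
  shows "card_of (f ` X \<union> g ` X) \<le>o card_of X"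
  using assms by (intro card_of_Un_ordLeq_infinite_Field)
    (simp_all add: Field_card_of card_of_card_order_on card_of_image)

section \<open>Interval partitions\<close>

(* The blocks [block_start G j, block_start G (Suc j)) partition the naturals, and the block
   starting at b contains [b, G b). *)
fun block_start :: "(nat \<Rightarrow> nat) \<Rightarrow> nat \<Rightarrow> nat" where
  "block_start G 0 = 0"
| "block_start G (Suc j) = max (Suc (block_start G j)) (G (block_start G j))"

lemma strict_mono_block_start: "strict_mono (block_start G)"
  unfolding strict_mono_Suc_iff by (simp add: less_max_iff_disj)

lemma le_block_start: "j \<le> block_start G j"
  using strict_mono_block_start strict_mono_imp_increasing by blast

lemma block_cover: "\<exists>j. block_start G j \<le> p \<and> p < block_start G (Suc j)"
proof (induction p)
  case 0
  then show ?case by (intro exI[of _ 0]) simp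
next
  case (Suc p)
  then obtain j where j: "block_start G j \<le> p" "p < block_start G (Suc j)" by blast
  show ?case
  proof (cases "Suc p < block_start G (Suc j)")
    case True
    then show ?thesis using j by (intro exI[of _ j]) simp
  next
    case False
    then have "block_start G (Suc j) = Suc p" using j by simp
    moreover have "block_start G (Suc j) < block_start G (Suc (Suc j))"
      using strict_mono_block_start by (rule strict_monoD) simp
    ultimately show ?thesis by (intro exI[of _ "Suc j"]) simp
  qed
qed

lemma block_index_unique:
  assumes "block_start G j \<le> p" "p < block_start G (Suc j)"
    and "block_start G j' \<le> p" "p < block_start G (Suc j')"
  shows "j = j'"
proof (rule ccontr)
  assume "j \<noteq> j'"
  then have "Suc j \<le> j' \<or> Suc j' \<le> j" by linarith
  then have "block_start G (Suc j) \<le> block_start G j' \<or> block_start G (Suc j') \<le> block_start G j"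
    using strict_mono_less_eq[OF strict_mono_block_start] by blast
  then show False using assms by linarith
qed

definition parity_blocks :: "(nat \<Rightarrow> nat) \<Rightarrow> bool \<Rightarrow> nat set" where
  "parity_blocks G r = {p. \<exists>j. even j = r \<and> block_start G j \<le> p \<and> p < block_start G (Suc j)}"

lemma mem_parity_blocks_iff:
  assumes "block_start G j \<le> p" "p < block_start G (Suc j)"
  shows "p \<in> parity_blocks G r \<longleftrightarrow> even j = r"
proof
  assume "p \<in> parity_blocks G r"
  then obtain j' where "even j' = r" "block_start G j' \<le> p" "p < block_start G (Suc j')"
    unfolding parity_blocks_def by blast
  then show "even j = r" using block_index_unique[OF assms] by blast
qed (use assms in \<open>auto simp: parity_blocks_def\<close>)

lemma not_mem_parity_blocks_iff: "p \<notin> parity_blocks G r \<longleftrightarrow> p \<in> parity_blocks G (\<not> r)"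
proof -
  obtain j where "block_start G j \<le> p" "p < block_start G (Suc j)" using block_cover by blast
  then show ?thesis using mem_parity_blocks_iff[of G j p] by simp
qed

lemma less_if_in_other_parity_block:
  assumes "even j = r" "block_start G j \<le> i" "l \<le> block_start G (Suc j)"
    and "p \<in> parity_blocks G (\<not> r)" "p < l"
  shows "p < i"
proof (rule ccontr)
  assume "\<not> p < i"
  then have "p \<in> parity_blocks G r" using assms mem_parity_blocks_iff[of G j p r] by simp
  then show False using assms(4) not_mem_parity_blocks_iff by blast
qed

lemma splits_imp_infinite: "splits A B \<Longrightarrow> infinite A"
  unfolding splits_def by auto

lemma not_splits_eventually_const:
  assumes "\<not> splits A B"
  obtains m c where "\<forall>p\<in>B. m \<le> p \<longrightarrow> (p \<in> A) = c"
proof -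
  have "finite (B \<inter> A) \<or> finite (B - A)" using assms unfolding splits_def by blast
  then show thesis
  proof
    assume "finite (B \<inter> A)"
    then obtain m where "B \<inter> A \<subseteq> {..<m}" using finite_nat_bounded by blast
    then have "\<forall>p\<in>B. m \<le> p \<longrightarrow> (p \<in> A) = False" by auto
    then show thesis by (rule that)
  next
    assume "finite (B - A)"
    then obtain m where "B - A \<subseteq> {..<m}" using finite_nat_bounded by blast
    then have "\<forall>p\<in>B. m \<le> p \<longrightarrow> (p \<in> A) = True" by auto
    then show thesis by (rule that)
  qed
qed

lemma infinite_inter_parity_blocks:
  assumes "\<forall>k\<ge>K. \<exists>b\<in>B. k \<le> b \<and> b < G k"
  shows "infinite (B \<inter> parity_blocks G r)"
  unfolding infinite_nat_iff_unbounded_le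
proof
  fix m
  define j where "j = 2 * (m + K) + (if r then 0 else 1)"
  have "even j = r" unfolding j_def by simp
  have "m + K \<le> j" unfolding j_def by simp
  then have jK: "m + K \<le> block_start G j" using le_block_start[of j G] by linarith
  then obtain b where b: "b \<in> B" "block_start G j \<le> b" "b < G (block_start G j)"
    using assms le_add2 le_trans by blast
  then have "b < block_start G (Suc j)" by simp
  then have "b \<in> parity_blocks G r"
    using mem_parity_blocks_iff b(2) \<open>even j = r\<close> by blast
  moreover have "m \<le> b" using jK b(2) by linarith
  ultimately show "\<exists>b\<ge>m. b \<in> B \<inter> parity_blocks G r" using b(1) by blast
qed

lemma splits_parity_blocks:
  assumes "\<forall>k\<ge>K. \<exists>b\<in>B. k \<le> b \<and> b < G k"
  shows "splits (parity_blocks G True) B"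
proof -
  have "B - parity_blocks G True = B \<inter> parity_blocks G False"
    using not_mem_parity_blocks_iff[of _ G True] by auto
  then show ?thesis
    unfolding splits_def using infinite_inter_parity_blocks[OF assms] by simp
qed

lemma frequently_less_if_not_splits:
  assumes "\<not> splits (parity_blocks G True) B" and "\<forall>k\<ge>K. \<exists>b\<in>B. k \<le> b \<and> b < h k"
  shows "\<exists>\<^sub>\<infinity>k. G k < h k"
proof (rule ccontr)
  assume "\<not> (\<exists>\<^sub>\<infinity>k. G k < h k)"
  then obtain K' where K': "\<forall>k\<ge>K'. h k \<le> G k" by (auto simp: MOST_nat_le not_less)
  have "\<exists>b\<in>B. k \<le> b \<and> b < G k" if "max K K' \<le> k" for k
  proof -
    have "K \<le> k" using that by simp
    then obtain b where "b \<in> B" "k \<le> b" "b < h k" using assms(2) by blast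
    moreover have "h k \<le> G k" using K' that by simp
    ultimately show ?thesis by (intro bexI[of _ b]) simp_all
  qed
  then show False using splits_parity_blocks assms(1) by blast
qed

lemma frequently_interval_in_block:
  assumes "mono h" and "\<And>k. k \<le> f k" and "\<exists>\<^sub>\<infinity>k. f (f k) < h k"
  shows "\<exists>\<^sub>\<infinity>i. \<exists>j. block_start h j \<le> i \<and> f i \<le> block_start h (Suc j)"
  unfolding INFM_nat_le
proof
  fix K
  obtain k where k: "K \<le> k" "f (f k) < h k" using assms(3) unfolding INFM_nat_le by blast
  obtain j where j: "block_start h j \<le> k" "k < block_start h (Suc j)" using block_cover by blast
  show "\<exists>i\<ge>K. \<exists>j. block_start h j \<le> i \<and> f i \<le> block_start h (Suc j)"
  proof (cases "f k \<le> block_start h (Suc j)")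
    case True
    then show ?thesis using k j by blast
  next
    case False
    have "h k \<le> h (block_start h (Suc j))" using j(2) by (intro monoD[OF assms(1)]) simp
    then have "f (f k) \<le> block_start h (Suc (Suc j))" using k(2) by simp
    moreover have "K \<le> f k" using k(1) assms(2) le_trans by blast
    moreover have "block_start h (Suc j) \<le> f k" using False by linarith
    ultimately show ?thesis by (intro exI[of _ "f k"] conjI exI[of _ "Suc j"])
  qed
qed

lemma frequently_ex_parity:
  assumes "\<exists>\<^sub>\<infinity>i. \<exists>j. P i j"
  obtains r where "\<exists>\<^sub>\<infinity>i. \<exists>j. even j = r \<and> P i j"
proof -
  have "\<exists>\<^sub>\<infinity>i. (\<exists>j. even j = True \<and> P i j) \<or> (\<exists>j. even j = False \<and> P i j)"
    using assms by (rule INFM_mono) auto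
  then show thesis using that unfolding INFM_disj_distrib by blast
qed

definition next_in :: "nat set \<Rightarrow> nat \<Rightarrow> nat" where
  "next_in S k = (LEAST b. b \<in> S \<and> k \<le> b)"

lemma next_in:
  assumes "infinite S"
  shows "next_in S k \<in> S" and "k \<le> next_in S k"
proof -
  obtain b where "k \<le> b" "b \<in> S" using assms unfolding infinite_nat_iff_unbounded_le by blast
  then have "next_in S k \<in> S \<and> k \<le> next_in S k"
    unfolding next_in_def by (intro LeastI[of "\<lambda>b. b \<in> S \<and> k \<le> b" b]) simp
  then show "next_in S k \<in> S" "k \<le> next_in S k" by blast+
qed

lemma mono_next_in:
  assumes "infinite S"
  shows "mono (next_in S)"
proof
  fix k k' :: nat
  assume "k \<le> k'"
  then have "next_in S k' \<in> S \<and> k \<le> next_in S k'" using next_in[OF assms] le_trans by blast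
  then show "next_in S k \<le> next_in S k'" unfolding next_in_def[of S k] by (rule Least_le)
qed

definition hitting_bound :: "(nat \<Rightarrow> nat set) \<Rightarrow> nat \<Rightarrow> nat" where
  "hitting_bound B k = Suc (\<Sum>n\<le>k. next_in (B n) k)"

lemma hitting_bound_hits:
  assumes "infinite (B n)" and "n \<le> k"
  shows "\<exists>b\<in>B n. k \<le> b \<and> b < hitting_bound B k"
proof -
  have "next_in (B n) k \<le> (\<Sum>n\<le>k. next_in (B n) k)"
    using assms(2) by (intro member_le_sum) simp_all
  then show ?thesis
    using next_in[OF assms(1)] unfolding hitting_bound_def by (intro bexI[of _ "next_in (B n) k"]) simp_all
qed

lemma mono_hitting_bound:
  assumes "\<And>n. infinite (B n)"
  shows "mono (hitting_bound B)"
proof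
  fix k k' :: nat
  assume "k \<le> k'"
  have "(\<Sum>n\<le>k. next_in (B n) k) \<le> (\<Sum>n\<le>k. next_in (B n) k')"
    using mono_next_in[OF assms] \<open>k \<le> k'\<close> by (intro sum_mono) (simp add: monoD)
  also have "\<dots> \<le> (\<Sum>n\<le>k'. next_in (B n) k')"
    using \<open>k \<le> k'\<close> by (intro sum_mono2) auto
  finally show "hitting_bound B k \<le> hitting_bound B k'"
    unfolding hitting_bound_def by simp
qed

section \<open>Splitting families\<close>

lemma omega_splitting_infinite_sets: "omega_splitting {A. infinite A}"
  unfolding omega_splitting_def
proof (intro conjI allI impI)
  fix B :: "nat \<Rightarrow> nat set"
  assume B: "\<forall>n. infinite (B n)"
  have "splits (parity_blocks (hitting_bound B) True) (B n)" for n
    using B hitting_bound_hits by (intro splits_parity_blocks[of n]) blast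
  then show "\<exists>A\<in>{A. infinite A}. \<forall>n. splits A (B n)"
    using splits_imp_infinite by blast
qed simp

lemma finite_family_homogeneous_subset:
  assumes "finite \<A>" and "infinite (B :: nat set)"
  shows "\<exists>B'\<subseteq>B. infinite B' \<and> (\<forall>A\<in>\<A>. B' \<subseteq> A \<or> B' \<inter> A = {})"
  using assms(1)
proof (induction \<A> rule: finite_induct)
  case empty
  then show ?case using assms(2) by blast
next
  case (insert A \<A>)
  then obtain B' where B': "B' \<subseteq> B" "infinite B'" "\<forall>A\<in>\<A>. B' \<subseteq> A \<or> B' \<inter> A = {}" by blast
  show ?case
  proof (cases "infinite (B' \<inter> A)")
    case True
    then show ?thesis using B' by (intro exI[of _ "B' \<inter> A"]) blast
  next
    case False
    have "B' = (B' \<inter> A) \<union> (B' - A)" by blast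
    then have "infinite (B' - A)" using False B'(2) by (metis finite_Un)
    then show ?thesis using B' by (intro exI[of _ "B' - A"]) blast
  qed
qed

lemma omega_splitting_infinite:
  assumes "omega_splitting \<A>"
  shows "infinite \<A>"
proof
  assume "finite \<A>"
  then obtain B :: "nat set" where B: "infinite B" "\<forall>A\<in>\<A>. B \<subseteq> A \<or> B \<inter> A = {}"
    using finite_family_homogeneous_subset[of \<A> UNIV] by blast
  obtain A where "A \<in> \<A>" "splits A B"
    using assms[unfolded omega_splitting_def, THEN conjunct2, rule_format, of "\<lambda>_. B"] B(1)
    by blast
  then have "B - A \<noteq> {}" "B \<inter> A \<noteq> {}" unfolding splits_def by (metis finite.emptyI)+
  then show False using B(2) \<open>A \<in> \<A>\<close> by blast
qed

lemma omega_splitting_countable: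
  assumes "omega_splitting \<A>" and "countable \<C>" and "\<forall>C\<in>\<C>. infinite C"
  shows "\<exists>A\<in>\<A>. \<forall>C\<in>\<C>. splits A C"
proof -
  define B where "B = from_nat_into (insert UNIV \<C>)"
  have range_B: "range B = insert UNIV \<C>" unfolding B_def using assms(2) by simp
  have "infinite (B n)" for n
  proof -
    have "B n \<in> insert UNIV \<C>" using range_B by blast
    then show ?thesis using assms(3) infinite_UNIV_nat by (cases "B n = UNIV") auto
  qed
  then obtain A where "A \<in> \<A>" "\<forall>n. splits A (B n)"
    using assms(1)[unfolded omega_splitting_def, THEN conjunct2, rule_format, of B] by blast
  moreover have "C \<in> range B" if "C \<in> \<C>" for C using range_B that by blast
  ultimately show ?thesis by blast
qed

definition char_prefixes :: "nat set \<Rightarrow> bool list set" where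
  "char_prefixes A = range (\<lambda>n. map (\<lambda>i. i \<in> A) [0..<n])"

lemma finite_char_prefixes_inter_S_set:
  assumes "splits A C"
  shows "finite (char_prefixes A \<inter> S_set C)"
proof -
  have "C \<inter> A \<noteq> {}" "C - A \<noteq> {}" using assms unfolding splits_def by (metis finite.emptyI)+
  then obtain a b where a: "a \<in> C" "a \<in> A" and b: "b \<in> C" "b \<notin> A" by blast
  have "char_prefixes A \<inter> S_set C \<subseteq> (\<lambda>n. map (\<lambda>i. i \<in> A) [0..<n]) ` {..max a b}"
  proof
    fix \<sigma> assume \<sigma>: "\<sigma> \<in> char_prefixes A \<inter> S_set C"
    then obtain n where n: "\<sigma> = map (\<lambda>i. i \<in> A) [0..<n]" unfolding char_prefixes_def by blast
    have "\<not> (a < n \<and> b < n)"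
    proof
      assume "a < n \<and> b < n"
      then have "\<sigma> ! a \<noteq> \<sigma> ! b" "a < length \<sigma>" "b < length \<sigma>" using a b n by simp_all
      then show False using \<sigma> a(1) b(1) unfolding S_set_def by blast
    qed
    then show "\<sigma> \<in> (\<lambda>n. map (\<lambda>i. i \<in> A) [0..<n]) ` {..max a b}" using n by auto
  qed
  then show ?thesis by (rule finite_subset) simp
qed

lemma S_set_in_Spl: "infinite A \<Longrightarrow> S_set A \<in> Spl"
  unfolding Spl_def by (intro CollectI exI[of _ "{A}"]) simp

lemma non_star_omega_family_char_prefixes:
  assumes "omega_splitting \<A>"
  shows "non_star_omega_family Spl (char_prefixes ` \<A>)"
  unfolding non_star_omega_family_def
proof (intro conjI ballI allI impI)
  fix F assume "F \<in> char_prefixes ` \<A>"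
  then obtain A where F: "F = char_prefixes A" by blast
  have "inj (\<lambda>n. map (\<lambda>i. i \<in> A) [0..<n])"
    by (rule injI) (metis diff_zero length_map length_upt)
  then show "infinite F" unfolding F char_prefixes_def by (rule range_inj_infinite)
  show "countable F" unfolding F char_prefixes_def by simp
next
  fix Ys :: "bool list set set"
  assume Ys: "countable Ys \<and> Ys \<subseteq> Spl"
  then have "\<forall>Y\<in>Ys. \<exists>Cs. finite Cs \<and> (\<forall>C\<in>Cs. infinite C) \<and> Y \<subseteq> (\<Union>C\<in>Cs. S_set C)"
    unfolding Spl_def by blast
  from bchoice[OF this] obtain gens where gens: "\<forall>Y\<in>Ys.
      finite (gens Y) \<and> (\<forall>C\<in>gens Y. infinite C) \<and> Y \<subseteq> (\<Union>C\<in>gens Y. S_set C)" ..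
  have "countable (\<Union>(gens ` Ys))" using Ys gens by (intro countable_UN) (auto intro: countable_finite)
  moreover have "\<forall>C\<in>\<Union>(gens ` Ys). infinite C" using gens by blast
  ultimately obtain A where "A \<in> \<A>" and A: "\<forall>C\<in>\<Union>(gens ` Ys). splits A C"
    by (metis omega_splitting_countable[OF assms])
  have "finite (Y \<inter> char_prefixes A)" if "Y \<in> Ys" for Y
  proof (rule finite_subset)
    show "Y \<inter> char_prefixes A \<subseteq> (\<Union>C\<in>gens Y. char_prefixes A \<inter> S_set C)"
      using gens that by blast
    show "finite (\<Union>C\<in>gens Y. char_prefixes A \<inter> S_set C)"
      using gens that A by (intro finite_UN_I finite_char_prefixes_inter_S_set) auto
  qed
  then show "\<exists>F\<in>char_prefixes ` \<A>. \<forall>Y\<in>Ys. finite (Y \<inter> F)" using \<open>A \<in> \<A>\<close> by blast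
qed

section \<open>Branches through infinite sets of nodes\<close>

definition extensions :: "bool list set \<Rightarrow> bool list \<Rightarrow> bool list set" where
  "extensions F \<tau> = {\<sigma>\<in>F. take (length \<tau>) \<sigma> = \<tau>}"

(* Koenig's lemma: every node of this branch has infinitely many extensions in an infinite F. *)
fun branch_node :: "bool list set \<Rightarrow> nat \<Rightarrow> bool list" where
  "branch_node F 0 = []"
| "branch_node F (Suc k) =
    (if infinite (extensions F (branch_node F k @ [True])) then branch_node F k @ [True]
     else branch_node F k @ [False])"

definition branch :: "bool list set \<Rightarrow> nat set" where
  "branch F = {p. branch_node F (Suc p) ! p}"

lemma extensions_subset:
  "extensions F \<tau> \<subseteq> {\<tau>} \<union> extensions F (\<tau> @ [True]) \<union> extensions F (\<tau> @ [False])"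
proof
  fix \<sigma> assume \<sigma>: "\<sigma> \<in> extensions F \<tau>"
  then have "take (length \<tau>) \<sigma> = \<tau>" unfolding extensions_def by blast
  show "\<sigma> \<in> {\<tau>} \<union> extensions F (\<tau> @ [True]) \<union> extensions F (\<tau> @ [False])"
  proof (cases "length \<tau> < length \<sigma>")
    case True
    then have "take (Suc (length \<tau>)) \<sigma> = \<tau> @ [\<sigma> ! length \<tau>]"
      using \<open>take (length \<tau>) \<sigma> = \<tau>\<close> by (simp add: take_Suc_conv_app_nth)
    then show ?thesis using \<sigma> unfolding extensions_def by (cases "\<sigma> ! length \<tau>") auto
  next
    case False
    then show ?thesis using \<open>take (length \<tau>) \<sigma> = \<tau>\<close> by simp
  qed
qed

lemma infinite_extensions_branch_node:
  assumes "infinite F"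
  shows "infinite (extensions F (branch_node F k))"
proof (induction k)
  case 0
  have "extensions F [] = F" unfolding extensions_def by simp
  then show ?case using assms by simp
next
  case (Suc k)
  let ?\<tau> = "branch_node F k"
  have "infinite (extensions F (?\<tau> @ [True])) \<or> infinite (extensions F (?\<tau> @ [False]))"
    using Suc.IH finite_subset[OF extensions_subset] by blast
  then show ?case by auto
qed

lemma length_branch_node: "length (branch_node F k) = k"
  by (induction k) auto

lemma take_branch_node: "k \<le> K \<Longrightarrow> take k (branch_node F K) = branch_node F k"
  by (induction K) (auto simp: le_Suc_eq length_branch_node)

lemma branch_node_nth: "p < k \<Longrightarrow> branch_node F k ! p = (p \<in> branch F)"
  using take_branch_node[of "Suc p" k F] nth_take[of p "Suc p" "branch_node F k"]
  unfolding branch_def by simp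

definition branch_witness :: "bool list set \<Rightarrow> nat \<Rightarrow> bool list" where
  "branch_witness F k = (SOME \<sigma>. \<sigma> \<in> extensions F (branch_node F k))"

definition witness_length :: "bool list set \<Rightarrow> nat \<Rightarrow> nat" where
  "witness_length F k = length (branch_witness F k)"

lemma branch_witness:
  assumes "infinite F"
  shows "branch_witness F k \<in> F" and "k \<le> witness_length F k"
    and "p < k \<Longrightarrow> branch_witness F k ! p = (p \<in> branch F)"
proof -
  have "extensions F (branch_node F k) \<noteq> {}"
    using infinite_extensions_branch_node[OF assms] by (metis finite.emptyI)
  then have "branch_witness F k \<in> extensions F (branch_node F k)"
    unfolding branch_witness_def by (rule some_in_eq[THEN iffD2])
  then have w: "branch_witness F k \<in> F" "take k (branch_witness F k) = branch_node F k"
    unfolding extensions_def length_branch_node by auto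
  then show "branch_witness F k \<in> F" by simp
  show "k \<le> witness_length F k"
    using arg_cong[OF w(2), of length] unfolding witness_length_def length_branch_node by simp
  assume "p < k"
  then show "branch_witness F k ! p = (p \<in> branch F)"
    using w(2) branch_node_nth[of p k F] nth_take[of p k "branch_witness F k"] by simp
qed

definition branch_blocks :: "bool list set \<Rightarrow> nat set" where
  "branch_blocks F = parity_blocks (\<lambda>k. witness_length F (witness_length F k)) True"

lemma infinite_inter_S_set_if_frequently_short:
  assumes "infinite F" and const: "\<forall>p\<in>C. (p \<in> branch F) = c"
    and short: "\<exists>\<^sub>\<infinity>i. \<forall>p\<in>C. p < witness_length F i \<longrightarrow> p < i"
  shows "infinite (F \<inter> S_set C)"
proof
  let ?I = "{i. \<forall>p\<in>C. p < witness_length F i \<longrightarrow> p < i}"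
  assume "finite (F \<inter> S_set C)"
  moreover have "branch_witness F ` ?I \<subseteq> F \<inter> S_set C"
  proof
    fix \<sigma> assume "\<sigma> \<in> branch_witness F ` ?I"
    then obtain i where i: "i \<in> ?I" "\<sigma> = branch_witness F i" by blast
    have "\<sigma> ! p = c" if "p \<in> C" "p < length \<sigma>" for p
      using i that const branch_witness(3)[OF assms(1)] unfolding witness_length_def by auto
    then show "\<sigma> \<in> F \<inter> S_set C"
      using i branch_witness(1)[OF assms(1)] unfolding S_set_def by auto
  qed
  ultimately have "finite (witness_length F ` ?I)"
    unfolding witness_length_def image_image[symmetric] by (meson finite_subset finite_imageI)
  then obtain M where M: "\<forall>i\<in>?I. witness_length F i < M"
    using finite_nat_bounded by (meson image_subset_iff lessThan_iff)
  obtain i where "i \<in> ?I" "M \<le> i" using short unfolding INFM_nat_le by auto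
  then show False using M branch_witness(2)[OF assms(1), of i] by fastforce
qed

lemma splits_branch_or_branch_blocks:
  assumes F: "infinite F" and B: "\<forall>n. infinite (B n)"
    and almost_disjoint:
      "\<forall>n r m. finite (F \<inter> S_set (B n \<inter> parity_blocks (hitting_bound B) r - {..<m}))"
  shows "(\<forall>n. splits (branch F) (B n)) \<or> (\<forall>n. splits (branch_blocks F) (B n))"
proof (rule ccontr)
  let ?h = "hitting_bound B"
  assume "\<not> ?thesis"
  then obtain n n' where "\<not> splits (branch F) (B n)" "\<not> splits (branch_blocks F) (B n')" by blast
  obtain m c where const: "\<forall>p\<in>B n. m \<le> p \<longrightarrow> (p \<in> branch F) = c"
    using not_splits_eventually_const[OF \<open>\<not> splits (branch F) (B n)\<close>] by blast
  have "\<forall>k\<ge>n'. \<exists>b\<in>B n'. k \<le> b \<and> b < ?h k" using B hitting_bound_hits by blast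
  then have "\<exists>\<^sub>\<infinity>k. witness_length F (witness_length F k) < ?h k"
    using \<open>\<not> splits (branch_blocks F) (B n')\<close> frequently_less_if_not_splits
    unfolding branch_blocks_def by blast
  then have "\<exists>\<^sub>\<infinity>i. \<exists>j. block_start ?h j \<le> i \<and> witness_length F i \<le> block_start ?h (Suc j)"
    using mono_hitting_bound B branch_witness(2)[OF F] by (intro frequently_interval_in_block) auto
  then obtain r where "\<exists>\<^sub>\<infinity>i. \<exists>j. even j = r \<and>
      block_start ?h j \<le> i \<and> witness_length F i \<le> block_start ?h (Suc j)"
    by (rule frequently_ex_parity)
  then have "\<exists>\<^sub>\<infinity>i. \<forall>p\<in>B n \<inter> parity_blocks ?h (\<not> r) - {..<m}. p < witness_length F i \<longrightarrow> p < i"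
    by (rule INFM_mono) (blast intro: less_if_in_other_parity_block)
  moreover have "\<forall>p\<in>B n \<inter> parity_blocks ?h (\<not> r) - {..<m}. (p \<in> branch F) = c"
    using const by auto
  ultimately have "infinite (F \<inter> S_set (B n \<inter> parity_blocks ?h (\<not> r) - {..<m}))"
    using infinite_inter_S_set_if_frequently_short[OF F] by blast
  then show False using almost_disjoint by blast
qed

lemma omega_splitting_branches_and_branch_blocks:
  assumes "non_star_omega_family Spl \<F>"
  shows "omega_splitting {A \<in> branch ` \<F> \<union> branch_blocks ` \<F>. infinite A}"
  unfolding omega_splitting_def
proof (intro conjI allI impI)
  fix B :: "nat \<Rightarrow> nat set"
  assume B: "\<forall>n. infinite (B n)"
  define D where "D = (\<lambda>(n, r, m). B n \<inter> parity_blocks (hitting_bound B) r - {..<m})"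
  have "infinite (D x)" for x
  proof -
    obtain n r m where x: "x = (n, r, m)" by (metis prod_cases3)
    have "\<forall>k\<ge>n. \<exists>b\<in>B n. k \<le> b \<and> b < hitting_bound B k" using B hitting_bound_hits by blast
    then show ?thesis unfolding x D_def using infinite_inter_parity_blocks by simp
  qed
  then have "countable (range (S_set \<circ> D)) \<and> range (S_set \<circ> D) \<subseteq> Spl"
    using S_set_in_Spl by auto
  then obtain F where "F \<in> \<F>" and "\<forall>x. finite (S_set (D x) \<inter> F)"
    using assms unfolding non_star_omega_family_def by (metis comp_apply rangeI)
  moreover have "infinite F" using assms \<open>F \<in> \<F>\<close> unfolding non_star_omega_family_def by blast
  ultimately have "(\<forall>n. splits (branch F) (B n)) \<or> (\<forall>n. splits (branch_blocks F) (B n))"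
    using B by (intro splits_branch_or_branch_blocks) (auto simp: D_def Int_commute)
  then show "\<exists>A\<in>{A \<in> branch ` \<F> \<union> branch_blocks ` \<F>. infinite A}. \<forall>n. splits A (B n)"
    using \<open>F \<in> \<F>\<close> splits_imp_infinite by blast
qed simp

lemma ex_omega_splitting_card_of_ordLeq:
  assumes "non_star_omega_family Spl \<F>"
  shows "\<exists>\<A>. omega_splitting \<A> \<and> card_of \<A> \<le>o card_of \<F>"
proof -
  let ?\<A> = "{A \<in> branch ` \<F> \<union> branch_blocks ` \<F>. infinite A}"
  have "omega_splitting ?\<A>" using omega_splitting_branches_and_branch_blocks[OF assms] .
  have "?\<A> \<subseteq> branch ` \<F> \<union> branch_blocks ` \<F>" by blast
  then have "infinite (branch ` \<F> \<union> branch_blocks ` \<F>)"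
    using omega_splitting_infinite[OF \<open>omega_splitting ?\<A>\<close>] finite_subset by blast
  then have "infinite \<F>" by auto
  have "card_of ?\<A> \<le>o card_of (branch ` \<F> \<union> branch_blocks ` \<F>)"
    using \<open>?\<A> \<subseteq> _\<close> by (rule card_of_mono1)
  moreover have "card_of (branch ` \<F> \<union> branch_blocks ` \<F>) \<le>o card_of \<F>"
    using \<open>infinite \<F>\<close> by (rule card_of_Un_images_ordLeq)
  ultimately have "card_of ?\<A> \<le>o card_of \<F>" by (rule ordLeq_transitive)
  then show ?thesis using \<open>omega_splitting ?\<A>\<close> by blast
qed

theorem mainTheorem15:
  shows "(non_star_omega Spl, s_omega) \<in> ordIso"
  unfolding non_star_omega_def s_omega_def
proof (rule card_of_minimal_ordIso)
  show "non_star_omega_family Spl (char_prefixes ` {A. infinite A})"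
    using omega_splitting_infinite_sets by (rule non_star_omega_family_char_prefixes)
next
  show "\<exists>\<A>. omega_splitting \<A> \<and> card_of \<A> \<le>o card_of \<F>"
    if "non_star_omega_family Spl \<F>" for \<F>
    using that by (rule ex_omega_splitting_card_of_ordLeq)
next
  show "\<exists>\<F>. non_star_omega_family Spl \<F> \<and> card_of \<F> \<le>o card_of \<A>"
    if "omega_splitting \<A>" for \<A>
    using that non_star_omega_family_char_prefixes card_of_image by blast
qed

end
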